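(* Let $\bar Y_n$ be the out-degree of a node chosen uniformly at random from the inserted nodes $\{1,\dots,n\}$ of a random ordered increasing $k$-tree of size $n\ge1$. Then for $m\ge0$, \[ \mathbb{P}\{\bar Y_n=m\}=\frac{1}{n\binom{n-\frac{k}{k+1}}{n}}\sum_{\ell=0}^{m}\frac{\binom{m}{\ell}(-1)^{\ell}}{k(\ell+2)+1}\left(\binom{n+\frac{1}{k+1}}{n}-\binom{n-\frac{k(\ell+2)}{k+1}}{n}\right). \] As $n\to\infty$, $\bar Y_n$ converges in distribution to a discrete random variable $\bar Y$ with \[ \mathbb{P}\{\bar Y=m\}=p_m:=\frac{k+1}{k(m+1)\binom{m+2+\frac1k}{m+1}},\quad m\ge0, \] and $p_m\sim\frac{k+1}{k}\Gamma(2+\frac1k)\,m^{-2-\frac1k}$ as $m\to\infty$.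
   Context: Fix an integer $k\ge1$. An ordered increasing $k$-tree of size $n\ge0$ is built as follows. Start with the root-clique $K_0$: $k$ pairwise adjacent vertices labelled $0_1,\dots,0_k$ (the root nodes; each label $0_\ell$ has value $0$). For $j=1,\dots,n$ in turn, node $j$ is inserted by choosing a currently existing $k$-clique $K$ and attaching $j$ to it, i.e. adding edges from $j$ to all $k$ vertices of $K$; $j$ is then a child of $K$ and the vertices of $K$ are the parents of $j$. The $k$-cliques available for attachment are the root-clique and, for every previously inserted node $x$ attached to a clique $K'$, the $k$ cliques $\{x\}\cup(K'\setminus\{w\})$, $w\in K'$. The children of each $k$-clique are linearly ordered: if $K$ currently has $d^+(K)$ children, there are $d^+(K)+1$ positions at which the new child may be placed, and the choice of position is part of the structure. Thus there are $1+(k+1)(j-1)$ ways to insert node $j$, and distinct sequences of choices give distinct trees. A random ordered increasing $k$-tree of size $n$ is one chosen uniformly among all of them; equivalently, it is produced by the process in which node $n$ is attached to the clique $K$ with probability $\frac{d^+(K)+1}{1+(k+1)(n-1)}$ (and a uniformly random position among the $d^+(K)+1$). The out-degree of a node $u$ is the number of nodes having $u$ as a parent (for a root node this is its number of non-root neighbours). For real $x$ and integer $m\ge0$, $\binom{x}{m}=x(x-1)\cdots(x-m+1)/m!$, and $\binom{x}{m}=0$ for $m<0$. *)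

theory Defs
  imports "HOL-Probability.Probability"
begin

text \<open>Vertices: root nodes Root i (i < k) standing for 0_(i+1), and inserted nodes Node j (j \<ge> 1).\<close>
datatype vtx = Root nat | Node nat

definition root_clique :: "nat \<Rightarrow> vtx set" where
  "root_clique k = Root ` {..<k}"

text \<open>A tree is described by its list of insertion choices: entry i (0-based) is the pair
  (K, p) where K is the clique to which node i+1 is attached and p \<in> {0..d+(K)} the chosen
  position among the children of K.\<close>
definition avail :: "nat \<Rightarrow> vtx set list \<Rightarrow> vtx set set" where
  "avail k Ks = insert (root_clique k)
     (\<Union>i<length Ks. (\<lambda>w. insert (Node (Suc i)) (Ks ! i - {w})) ` (Ks ! i))"

definition nchildren :: "vtx set list \<Rightarrow> vtx set \<Rightarrow> nat" where
  "nchildren Ks K = length (filter (\<lambda>K'. K' = K) Ks)"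

fun trees :: "nat \<Rightarrow> nat \<Rightarrow> (vtx set \<times> nat) list set" where
  "trees k 0 = {[]}"
| "trees k (Suc n) = {t @ [(K, p)] | t K p. t \<in> trees k n \<and> K \<in> avail k (map fst t)
                         \<and> p \<le> nchildren (map fst t) K}"

text \<open>Out-degree of inserted node u: number of nodes having u as a parent.\<close>
definition outdeg :: "(vtx set \<times> nat) list \<Rightarrow> nat \<Rightarrow> nat" where
  "outdeg t u = card {j. j < length t \<and> Node u \<in> fst (t ! j)}"

definition Ybar_prob :: "nat \<Rightarrow> nat \<Rightarrow> nat \<Rightarrow> real" where
  "Ybar_prob k n m = measure_pmf.prob (pmf_of_set (trees k n \<times> {1..n}))
                        {x. outdeg (fst x) (snd x) = m}"

definition p_lim :: "nat \<Rightarrow> nat \<Rightarrow> real" where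
  "p_lim k m = (real k + 1) /
     (real k * real (m + 1) * ((real m + 2 + 1 / real k) gchoose (m + 1)))"

end

theory Submission
  imports Defs
begin

text \<open>For a test function \<psi> on out-degrees let D(n, \<psi>) be the sum of \<psi>(outdeg t u) over all
  trees t of size n and nodes u. Node n + 1 can be inserted in W(n) = 1 + (k + 1) n ways, and a
  node of out-degree d lies in k + (k - 1) d of the available cliques, whose weights (number of
  children plus one) add up to k (d + 1). Hence D(n + 1, \<psi>) = D(n, L \<psi>) + W(n) \<psi>(0) T(n),
  with T(n) the number of trees and (L \<psi>)(d) = (W(n) - k (d + 1)) \<psi>(d) + k (d + 1) \<psi>(d + 1).
  The functions d \<mapsto> (-1)^d (l choose d) are eigenfunctions of L, so their degree sums are
  explicit products, and by binomial inversion the indicator of {d = m} is an alternating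
  combination of them; rewriting the products as binomial coefficients gives the exact law.
  As n \<rightarrow> \<infinity> only the total count T survives, and
  \<Sum>l (m choose l) (-1)^l / (l + c) = m! / pochhammer c (m + 1) expresses the limit as a ratio of a
  factorial and a Pochhammer symbol, which telescopes to total mass 1 and is a rescaled partial
  Gamma product.\<close>

section \<open>Binomial and Pochhammer identities\<close>

lemma gbinomial_mult_fact_power:
  fixes c x :: "'a::field_char_0"
  shows "fact n * c ^ n * ((of_nat n + x) gchoose n) = (\<Prod>i<n. c * (x + 1 + of_nat i))"
  by (simp add: gbinomial_pochhammer' pochhammer_prod atLeast0LessThan prod.distrib)

lemma sum_alternating_binomial_divide_Suc:
  fixes c :: real
  shows "(\<Sum>l\<le>Suc m. real (Suc m choose l) * (-1) ^ l / (real l + c)) =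
           (\<Sum>l\<le>m. real (m choose l) * (-1) ^ l / (real l + c))
           - (\<Sum>l\<le>m. real (m choose l) * (-1) ^ l / (real l + (c + 1)))"
proof -
  let ?f = "\<lambda>c l. real (m choose l) * (-1) ^ l / (real l + c)"
  have "(\<Sum>l\<le>Suc m. real (Suc m choose l) * (-1) ^ l / (real l + c)) =
          1 / c + (\<Sum>i\<le>m. ?f c (Suc i) - ?f (c + 1) i)"
    by (simp add: sum.atMost_Suc_shift binomial_Suc_Suc divide_inverse algebra_simps del: sum.atMost_Suc)
      (rule sum.cong[OF refl], linarith)
  also have "1 / c + (\<Sum>i\<le>m. ?f c (Suc i)) = (\<Sum>l\<le>Suc m. ?f c l)"
    by (simp add: sum.atMost_Suc_shift del: sum.atMost_Suc)
  then have "1 / c + (\<Sum>i\<le>m. ?f c (Suc i) - ?f (c + 1) i) =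
               (\<Sum>l\<le>Suc m. ?f c l) - (\<Sum>l\<le>m. ?f (c + 1) l)"
    by (simp add: sum_subtractf)
  finally show ?thesis by simp
qed

lemma fact_div_pochhammer_diff:
  fixes z :: real
  assumes "z > 0"
  shows "fact m / pochhammer z (Suc m) - fact m / pochhammer (z + 1) (Suc m) =
           fact (Suc m) / pochhammer z (Suc (Suc m))"
proof -
  have P: "pochhammer z (Suc m) > 0" "pochhammer (z + 1) (Suc m) > 0"
    using assms by (simp_all add: pochhammer_pos)
  have "fact m / pochhammer z (Suc m) = fact m * (z + real (Suc m)) / pochhammer z (Suc (Suc m))"
    using P assms by (simp add: pochhammer_Suc[of z "Suc m"] add_pos_nonneg)
  moreover have "fact m / pochhammer (z + 1) (Suc m) = fact m * z / pochhammer z (Suc (Suc m))"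
    using P assms by (simp add: pochhammer_rec[of z "Suc m"])
  ultimately show ?thesis
    by (simp add: diff_divide_distrib[symmetric] algebra_simps)
qed

lemma sum_alternating_binomial_divide:
  fixes c :: real
  assumes "c > 0"
  shows "(\<Sum>l\<le>m. real (m choose l) * (-1) ^ l / (real l + c)) = fact m / pochhammer c (Suc m)"
  using assms
proof (induction m arbitrary: c)
  case (Suc m)
  then show ?case
    by (simp only: sum_alternating_binomial_divide_Suc Suc.IH fact_div_pochhammer_diff)
qed simp

lemma fact_div_pochhammer_telescope:
  fixes z :: real
  assumes "z > 0"
  shows "(z - 1) * fact m / pochhammer z (Suc m) =
           fact m / pochhammer z m - fact (Suc m) / pochhammer z (Suc m)"
proof -
  have "pochhammer z m > 0" using assms by (rule pochhammer_pos)
  moreover have "z + real m > 0" using assms by simp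
  ultimately show ?thesis
    by (simp add: pochhammer_Suc divide_simps) (simp add: algebra_simps)
qed

lemma fact_div_pochhammer_le:
  fixes z :: real
  assumes "2 \<le> z"
  shows "fact m / pochhammer z m \<le> 1 / real (Suc m)"
proof -
  have "fact (Suc m) = pochhammer (2::real) m"
    by (simp add: pochhammer_fact pochhammer_rec)
  also have "\<dots> \<le> pochhammer z m"
    unfolding pochhammer_prod using assms by (intro prod_mono) auto
  finally have "fact m * real (Suc m) \<le> pochhammer z m"
    by (simp add: algebra_simps)
  then show ?thesis
    using pochhammer_pos[of z m] assms by (simp add: divide_simps)
qed

lemma sums_fact_div_pochhammer:
  fixes z :: real
  assumes "2 \<le> z"
  shows "(\<lambda>m. (z - 1) * fact m / pochhammer z (Suc m)) sums 1"
proof -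
  have "(\<lambda>m. fact m / pochhammer z m) \<longlonglongrightarrow> 0"
    using fact_div_pochhammer_le[OF assms] pochhammer_pos[of z] assms
    by (intro tendsto_sandwich[OF _ _ tendsto_const LIMSEQ_inverse_real_of_nat])
       (auto intro!: always_eventually divide_nonneg_pos simp: inverse_eq_divide)
  from telescope_sums'[OF this] show ?thesis
    using assms by (simp add: fact_div_pochhammer_telescope)
qed

lemma Suc_times_binomial_real:
  "(real d + 1) * real (l choose Suc d) = (real l - real d) * real (l choose d)"
  using gbinomial_absorption[of d "real l"] gbinomial_absorb_comp[of "real l" d]
  by (simp add: binomial_gbinomial algebra_simps)

section \<open>Attachment cliques\<close>

fun level :: "vtx \<Rightarrow> nat" where
  "level (Root _) = 0"
| "level (Node j) = j"

definition clique_upto :: "nat \<Rightarrow> nat \<Rightarrow> vtx set \<Rightarrow> bool" where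
  "clique_upto k n K \<longleftrightarrow> finite K \<and> card K = k \<and> (\<forall>v\<in>K. level v \<le> n)"

definition valid_cliques :: "nat \<Rightarrow> vtx set list \<Rightarrow> bool" where
  "valid_cliques k Ks \<longleftrightarrow> (\<forall>i<length Ks. Ks ! i \<in> avail k (take i Ks))"

definition child_clique :: "vtx set list \<Rightarrow> nat \<Rightarrow> vtx \<Rightarrow> vtx set" where
  "child_clique Ks i w = insert (Node (Suc i)) (Ks ! i - {w})"

lemma avail_eq_child_cliques:
  "avail k Ks = insert (root_clique k) (\<Union>i<length Ks. child_clique Ks i ` (Ks ! i))"
  unfolding avail_def child_clique_def by simp

lemma clique_upto_root: "clique_upto k 0 (root_clique k)"
  unfolding clique_upto_def root_clique_def by (auto simp: card_image inj_on_def)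

lemma clique_upto_mono: "clique_upto k i K \<Longrightarrow> i \<le> j \<Longrightarrow> clique_upto k j K"
  unfolding clique_upto_def by auto

lemma clique_upto_child:
  assumes "clique_upto k i K" "w \<in> K"
  shows "clique_upto k (Suc i) (insert (Node (Suc i)) (K - {w}))"
proof -
  have K: "finite K" "card K = k" "\<forall>v\<in>K. level v \<le> i"
    using assms(1) unfolding clique_upto_def by auto
  then have "Node (Suc i) \<notin> K" by fastforce
  moreover have "card K > 0" using K(1) assms(2) card_gt_0_iff by blast
  ultimately show ?thesis using K assms(2) unfolding clique_upto_def by (auto simp: card_insert_if)
qed

lemma clique_upto_avail:
  assumes "\<forall>i<length Ks. clique_upto k i (Ks ! i)" "K \<in> avail k Ks"
  shows "clique_upto k (length Ks) K"
  using assms(2) unfolding avail_def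
proof (elim insertE UN_E imageE)
  fix i w assume "i \<in> {..<length Ks}" "w \<in> Ks ! i" "K = insert (Node (Suc i)) (Ks ! i - {w})"
  then show ?thesis using assms(1) clique_upto_child clique_upto_mono by (metis Suc_leI lessThan_iff)
qed (simp add: clique_upto_mono[OF clique_upto_root])

lemma valid_cliques_nth:
  "valid_cliques k Ks \<Longrightarrow> i < length Ks \<Longrightarrow> clique_upto k i (Ks ! i)"
proof (induction i arbitrary: Ks rule: less_induct)
  case (less i)
  then have "\<forall>j<length (take i Ks). clique_upto k j (take i Ks ! j)"
    unfolding valid_cliques_def by (auto intro!: less.IH simp: min_def)
  moreover have "Ks ! i \<in> avail k (take i Ks)" using less.prems unfolding valid_cliques_def by auto
  ultimately show ?case using clique_upto_avail less.prems by fastforce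
qed

lemma valid_cliques_avail:
  "valid_cliques k Ks \<Longrightarrow> K \<in> avail k Ks \<Longrightarrow> clique_upto k (length Ks) K"
  using clique_upto_avail valid_cliques_nth by blast

lemma avail_take_subset: "avail k (take i Ks) \<subseteq> avail k Ks"
  unfolding avail_def by auto

lemma valid_cliques_set_subset_avail: "valid_cliques k Ks \<Longrightarrow> set Ks \<subseteq> avail k Ks"
  unfolding valid_cliques_def using avail_take_subset by (fastforce simp: in_set_conv_nth)

lemma inj_on_child_clique:
  assumes "valid_cliques k Ks" "i < length Ks"
  shows "inj_on (child_clique Ks i) (Ks ! i)"
proof
  fix w w' assume w: "w \<in> Ks ! i" "w' \<in> Ks ! i" and eq: "child_clique Ks i w = child_clique Ks i w'"
  have "Node (Suc i) \<notin> Ks ! i"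
    using valid_cliques_nth[OF assms] unfolding clique_upto_def by fastforce
  then have "Ks ! i - {w} = Ks ! i - {w'}"
    using arg_cong[OF eq, of "\<lambda>K. K - {Node (Suc i)}"] unfolding child_clique_def by auto
  then show "w = w'" using w by blast
qed

lemma child_cliques_disjoint:
  assumes "valid_cliques k Ks" "i < j" "j < length Ks"
  shows "child_clique Ks i ` (Ks ! i) \<inter> child_clique Ks j ` (Ks ! j) = {}"
proof -
  have "clique_upto k (Suc i) K" if "K \<in> child_clique Ks i ` (Ks ! i)" for K
    using that valid_cliques_nth[OF assms(1), of i] assms(2,3) clique_upto_child
    unfolding child_clique_def by auto
  then have "level v \<le> Suc i" if "K \<in> child_clique Ks i ` (Ks ! i)" "v \<in> K" for K v
    using that unfolding clique_upto_def by blast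
  moreover have "Node (Suc j) \<in> K" if "K \<in> child_clique Ks j ` (Ks ! j)" for K
    using that unfolding child_clique_def by auto
  ultimately show ?thesis using assms(2) by fastforce
qed

lemma finite_avail: "valid_cliques k Ks \<Longrightarrow> finite (avail k Ks)"
  unfolding avail_eq_child_cliques using valid_cliques_nth clique_upto_def by auto

lemma sum_avail:
  assumes "valid_cliques k Ks"
  shows "(\<Sum>K\<in>avail k Ks. f K) =
           f (root_clique k) + (\<Sum>i<length Ks. \<Sum>w\<in>Ks ! i. f (child_clique Ks i w))"
proof -
  let ?C = "\<lambda>i. child_clique Ks i ` (Ks ! i)"
  have fin: "finite (Ks ! i)" if "i < length Ks" for i
    using valid_cliques_nth[OF assms that] unfolding clique_upto_def by blast
  have disj: "?C i \<inter> ?C j = {}" if "i \<noteq> j" "i < length Ks" "j < length Ks" for i j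
    using that child_cliques_disjoint[OF assms, of i j] child_cliques_disjoint[OF assms, of j i]
    by (cases "i < j") (auto simp: Int_commute)
  have "root_clique k \<notin> (\<Union>i<length Ks. ?C i)"
    unfolding root_clique_def child_clique_def by auto
  then have "(\<Sum>K\<in>avail k Ks. f K) = f (root_clique k) + (\<Sum>K\<in>(\<Union>i<length Ks. ?C i). f K)"
    unfolding avail_eq_child_cliques using fin by simp
  also have "(\<Sum>K\<in>(\<Union>i<length Ks. ?C i). f K) = (\<Sum>i<length Ks. \<Sum>K\<in>?C i. f K)"
    using fin disj by (intro sum.UNION_disjoint) auto
  also have "\<dots> = (\<Sum>i<length Ks. \<Sum>w\<in>Ks ! i. f (child_clique Ks i w))"
    using inj_on_child_clique[OF assms] by (intro sum.cong refl) (simp add: sum.reindex)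
  finally show ?thesis .
qed

lemma card_avail: "valid_cliques k Ks \<Longrightarrow> card (avail k Ks) = 1 + k * length Ks"
  using sum_avail[of k Ks "\<lambda>_. 1::nat"] valid_cliques_nth by (simp add: clique_upto_def)

lemma card_child_cliques_containing:
  assumes "valid_cliques k Ks" "i < length Ks"
  shows "real (card {w \<in> Ks ! i. Node u \<in> child_clique Ks i w}) =
           (if u = Suc i then real k else 0) + (if Node u \<in> Ks ! i then real k - 1 else 0)"
proof -
  have K: "finite (Ks ! i)" "card (Ks ! i) = k" "Node (Suc i) \<notin> Ks ! i"
    using valid_cliques_nth[OF assms] unfolding clique_upto_def by fastforce+
  then have k_pos: "k \<ge> 1" if "Node u \<in> Ks ! i" using that card_gt_0_iff[of "Ks ! i"] by auto
  show ?thesis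
  proof (cases "u = Suc i")
    case False
    then have "{w \<in> Ks ! i. Node u \<in> child_clique Ks i w} =
                 (if Node u \<in> Ks ! i then Ks ! i - {Node u} else {})"
      unfolding child_clique_def by auto
    then show ?thesis using False K k_pos by (simp add: of_nat_diff)
  qed (use K in \<open>simp add: child_clique_def\<close>)
qed

lemma card_avail_containing:
  assumes "valid_cliques k Ks" "1 \<le> u" "u \<le> length Ks"
  shows "real (card {K \<in> avail k Ks. Node u \<in> K}) =
           real k + (real k - 1) * real (length (filter (\<lambda>K. Node u \<in> K) Ks))"
proof -
  have "real (card {K \<in> avail k Ks. Node u \<in> K}) = (\<Sum>K\<in>avail k Ks. of_bool (Node u \<in> K))"
    using finite_avail[OF assms(1)] by (simp add: Collect_conj_eq Int_commute Collect_mem_eq)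
  also have "\<dots> = (\<Sum>i<length Ks. real (card {w \<in> Ks ! i. Node u \<in> child_clique Ks i w}))"
    using valid_cliques_nth[OF assms(1)]
    by (simp add: sum_avail[OF assms(1)] root_clique_def clique_upto_def Collect_conj_eq Int_commute
        image_iff)
  also have "\<dots> = (\<Sum>i<length Ks. if u = Suc i then real k else 0)
                  + (\<Sum>i<length Ks. if Node u \<in> Ks ! i then real k - 1 else 0)"
    by (simp add: card_child_cliques_containing[OF assms(1)] sum.distrib)
  also have "(\<Sum>i<length Ks. if u = Suc i then real k else 0) = real k"
    using assms(2,3) by (subst sum.cong[OF refl, of _ _ "\<lambda>i. if i = u - 1 then real k else 0"]) auto
  also have "(\<Sum>i<length Ks. if Node u \<in> Ks ! i then real k - 1 else 0) =
               (real k - 1) * real (length (filter (\<lambda>K. Node u \<in> K) Ks))"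
    by (simp add: sum.If_cases length_filter_conv_card lessThan_def Collect_conj_eq)
  finally show ?thesis .
qed

lemma sum_nchildren:
  fixes f :: "vtx set \<Rightarrow> 'a::comm_semiring_1"
  assumes "finite A" "set Ks \<subseteq> A"
  shows "(\<Sum>K\<in>A. of_nat (nchildren Ks K) * f K) = (\<Sum>K\<leftarrow>Ks. f K)"
  using assms(2)
proof (induction Ks)
  case (Cons K' Ks)
  have "(\<Sum>K\<in>A. of_nat (nchildren (K' # Ks) K) * f K) =
          (\<Sum>K\<in>A. of_bool (K' = K) * f K) + (\<Sum>K\<in>A. of_nat (nchildren Ks K) * f K)"
    by (simp add: sum.distrib[symmetric] distrib_right) (intro sum.cong, auto simp: nchildren_def algebra_simps)
  then show ?case using Cons assms(1) by simp
qed (simp add: nchildren_def)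

definition insertion_ways :: "nat \<Rightarrow> nat \<Rightarrow> real" where
  "insertion_ways k n = 1 + (real k + 1) * real n"

lemma sum_attach_weight:
  assumes "valid_cliques k Ks"
  shows "(\<Sum>K\<in>avail k Ks. real (nchildren Ks K) + 1) = insertion_ways k (length Ks)"
  using sum_nchildren[OF finite_avail[OF assms] valid_cliques_set_subset_avail[OF assms], of "\<lambda>_. 1"]
    card_avail[OF assms]
  by (simp add: sum.distrib insertion_ways_def sum_list_triv algebra_simps)

lemma sum_attach_weight_containing:
  assumes "valid_cliques k Ks" "1 \<le> u" "u \<le> length Ks"
  shows "(\<Sum>K\<in>{K \<in> avail k Ks. Node u \<in> K}. real (nchildren Ks K) + 1) =
           real k * (real (length (filter (\<lambda>K. Node u \<in> K) Ks)) + 1)"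
proof -
  have sum_list_of_bool:
    "(\<Sum>K\<leftarrow>Ks. of_bool (Node u \<in> K)) = real (length (filter (\<lambda>K. Node u \<in> K) Ks))"
    by (induction Ks) auto
  have "(\<Sum>K\<in>{K \<in> avail k Ks. Node u \<in> K}. real (nchildren Ks K)) =
          (\<Sum>K\<in>avail k Ks. real (nchildren Ks K) * of_bool (Node u \<in> K))"
    using finite_avail[OF assms(1)] by (simp add: Collect_conj_eq Int_commute)
  also have "\<dots> = real (length (filter (\<lambda>K. Node u \<in> K) Ks))"
    by (simp only: sum_nchildren[OF finite_avail[OF assms(1)] valid_cliques_set_subset_avail[OF assms(1)]]
        sum_list_of_bool)
  finally show ?thesis
    using card_avail_containing[OF assms] by (simp add: sum.distrib algebra_simps)
qed

lemma sum_attach_weight_step: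
  fixes \<psi> :: "nat \<Rightarrow> real"
  assumes "valid_cliques k Ks" "1 \<le> u" "u \<le> length Ks"
    and d: "d = length (filter (\<lambda>K. Node u \<in> K) Ks)"
  shows "(\<Sum>K\<in>avail k Ks. (real (nchildren Ks K) + 1) * \<psi> (d + of_bool (Node u \<in> K))) =
           (insertion_ways k (length Ks) - real k * (real d + 1)) * \<psi> d
           + real k * (real d + 1) * \<psi> (Suc d)"
proof -
  have "c * \<psi> (d + of_bool b) = c * \<psi> d + (if b then c else 0) * (\<psi> (Suc d) - \<psi> d)" for b c
    by (cases b) (auto simp: algebra_simps)
  then have "(\<Sum>K\<in>avail k Ks. (real (nchildren Ks K) + 1) * \<psi> (d + of_bool (Node u \<in> K))) =
      (\<Sum>K\<in>avail k Ks. real (nchildren Ks K) + 1) * \<psi> d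
      + (\<Sum>K\<in>avail k Ks. if Node u \<in> K then real (nchildren Ks K) + 1 else 0) * (\<psi> (Suc d) - \<psi> d)"
    by (simp only: sum.distrib sum_distrib_right distrib_right)
  also have "(\<Sum>K\<in>avail k Ks. if Node u \<in> K then real (nchildren Ks K) + 1 else 0) =
               (\<Sum>K\<in>{K \<in> avail k Ks. Node u \<in> K}. real (nchildren Ks K) + 1)"
    by (rule sum.inter_filter[OF finite_avail[OF assms(1)], symmetric])
  finally show ?thesis
    using sum_attach_weight[OF assms(1)] sum_attach_weight_containing[OF assms(1-3)] d
    by (simp add: algebra_simps)
qed

section \<open>Counting trees\<close>

lemma trees_Suc_eq_image:
  "trees k (Suc n) = (\<lambda>(t, K, p). t @ [(K, p)]) `
     (SIGMA t:trees k n. SIGMA K:avail k (map fst t). {..nchildren (map fst t) K})"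
  by (auto simp: image_iff)

lemma length_trees: "t \<in> trees k n \<Longrightarrow> length t = n"
  by (induction n arbitrary: t) auto

lemma valid_cliques_trees: "t \<in> trees k n \<Longrightarrow> valid_cliques k (map fst t)"
proof (induction n arbitrary: t)
  case (Suc n)
  then obtain t' K p where "t = t' @ [(K, p)]" "t' \<in> trees k n" "K \<in> avail k (map fst t')"
    by auto
  with Suc.IH[of t'] show ?case
    by (auto simp: valid_cliques_def nth_append less_Suc_eq)
qed (simp add: valid_cliques_def)

lemma finite_trees: "finite (trees k n)"
proof (induction n)
  case (Suc n)
  then show ?case unfolding trees_Suc_eq_image
    by (intro finite_imageI finite_SigmaI) (auto simp: valid_cliques_trees finite_avail)
qed simp

lemma sum_trees_Suc:
  "(\<Sum>t\<in>trees k (Suc n). F t) =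
     (\<Sum>t\<in>trees k n. \<Sum>K\<in>avail k (map fst t). \<Sum>p\<le>nchildren (map fst t) K. F (t @ [(K, p)]))"
proof -
  let ?S = "SIGMA t:trees k n. SIGMA K:avail k (map fst t). {..nchildren (map fst t) K}"
  have inj: "inj_on (\<lambda>(t, K, p). t @ [(K, p)]) ?S"
    by (auto simp: inj_on_def)
  have "(\<Sum>t\<in>trees k (Suc n). F t) = (\<Sum>(t, K, p)\<in>?S. F (t @ [(K, p)]))"
    unfolding trees_Suc_eq_image by (subst sum.reindex[OF inj]) (simp add: case_prod_beta)
  also have "\<dots> = (\<Sum>t\<in>trees k n. \<Sum>(K, p)\<in>(SIGMA K:avail k (map fst t). {..nchildren (map fst t) K}).
                      F (t @ [(K, p)]))"
    by (subst sum.Sigma) (auto simp: finite_trees valid_cliques_trees finite_avail)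
  also have "\<dots> = (\<Sum>t\<in>trees k n. \<Sum>K\<in>avail k (map fst t). \<Sum>p\<le>nchildren (map fst t) K.
                      F (t @ [(K, p)]))"
    by (intro sum.cong refl, subst sum.Sigma) (auto simp: valid_cliques_trees finite_avail)
  finally show ?thesis .
qed

definition tree_count :: "nat \<Rightarrow> nat \<Rightarrow> real" where
  "tree_count k n = (\<Prod>i<n. insertion_ways k i)"

lemma insertion_ways_pos: "insertion_ways k n > 0"
  unfolding insertion_ways_def by (simp add: add_pos_nonneg)

lemma tree_count_Suc: "tree_count k (Suc n) = insertion_ways k n * tree_count k n"
  by (simp add: tree_count_def)

lemma tree_count_pos: "tree_count k n > 0"
  unfolding tree_count_def by (simp add: prod_pos insertion_ways_pos)

lemma card_trees: "real (card (trees k n)) = tree_count k n"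
proof (induction n)
  case (Suc n)
  have "real (card (trees k (Suc n))) =
          (\<Sum>t\<in>trees k n. \<Sum>K\<in>avail k (map fst t). real (nchildren (map fst t) K) + 1)"
    unfolding real_of_card sum_trees_Suc by (simp add: add.commute[of 1])
  also have "\<dots> = (\<Sum>t\<in>trees k n. insertion_ways k n)"
    by (intro sum.cong refl) (metis sum_attach_weight valid_cliques_trees length_trees length_map)
  finally show ?case using Suc by (simp add: tree_count_def)
qed (simp add: tree_count_def)

lemma outdeg_eq_length_filter: "outdeg t u = length (filter (\<lambda>K. Node u \<in> K) (map fst t))"
  unfolding outdeg_def length_filter_conv_card by (rule arg_cong[where f = card]) auto

lemma outdeg_append: "outdeg (t @ [(K, p)]) u = outdeg t u + of_bool (Node u \<in> K)"
  unfolding outdeg_eq_length_filter by simp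

lemma outdeg_new_node:
  assumes "t \<in> trees k n" "K \<in> avail k (map fst t)"
  shows "outdeg (t @ [(K, p)]) (Suc n) = 0"
proof -
  let ?Ks = "map fst t"
  have valid: "valid_cliques k ?Ks" and len: "length ?Ks = n"
    using valid_cliques_trees[OF assms(1)] length_trees[OF assms(1)] by simp_all
  have "clique_upto k n K'" if K': "K' \<in> set (?Ks @ [K])" for K'
  proof (cases "K' = K")
    case False
    then have "K' \<in> set ?Ks" using K' by simp
    then obtain i where "i < n" "K' = ?Ks ! i" using len by (metis in_set_conv_nth)
    then show ?thesis using valid_cliques_nth[OF valid] len clique_upto_mono[of k i K' n] by simp
  qed (use valid_cliques_avail[OF valid assms(2)] len in simp)
  then have "level v \<le> n" if "K' \<in> set (?Ks @ [K])" "v \<in> K'" for K' v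
    using that unfolding clique_upto_def by blast
  then have "\<forall>K'\<in>set (?Ks @ [K]). Node (Suc n) \<notin> K'"
    by (metis level.simps(2) not_less_eq_eq order_refl)
  then show ?thesis
    unfolding outdeg_eq_length_filter by (simp add: filter_empty_conv)
qed

section \<open>Degree sums\<close>

definition degree_sum :: "nat \<Rightarrow> nat \<Rightarrow> (nat \<Rightarrow> real) \<Rightarrow> real" where
  "degree_sum k n \<psi> = (\<Sum>t\<in>trees k n. \<Sum>u\<in>{1..n}. \<psi> (outdeg t u))"

lemma degree_sum_linear:
  "finite A \<Longrightarrow>
     degree_sum k n (\<lambda>d. \<Sum>l\<in>A. c l * f l d) = (\<Sum>l\<in>A. c l * degree_sum k n (f l))"
  unfolding degree_sum_def by (simp add: sum_distrib_left sum.swap[of _ A])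

lemma degree_sum_cmult: "degree_sum k n (\<lambda>d. c * \<psi> d) = c * degree_sum k n \<psi>"
  unfolding degree_sum_def by (simp add: sum_distrib_left)

lemma sum_extensions_outdeg:
  fixes \<psi> :: "nat \<Rightarrow> real"
  assumes t: "t \<in> trees k n"
  shows "(\<Sum>K\<in>avail k (map fst t). \<Sum>p\<le>nchildren (map fst t) K.
            \<Sum>u\<in>{1..Suc n}. \<psi> (outdeg (t @ [(K, p)]) u)) =
         (\<Sum>u\<in>{1..n}. (insertion_ways k n - real k * (real (outdeg t u) + 1)) * \<psi> (outdeg t u)
                      + real k * (real (outdeg t u) + 1) * \<psi> (Suc (outdeg t u)))
         + insertion_ways k n * \<psi> 0"
proof -
  let ?Ks = "map fst t"
  let ?w = "\<lambda>K. real (nchildren ?Ks K) + 1"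
  have valid: "valid_cliques k ?Ks" and len: "length ?Ks = n"
    using valid_cliques_trees[OF t] length_trees[OF t] by simp_all
  have "(\<Sum>u\<in>{1..Suc n}. \<psi> (outdeg (t @ [(K, p)]) u)) =
          \<psi> 0 + (\<Sum>u\<in>{1..n}. \<psi> (outdeg t u + of_bool (Node u \<in> K)))"
    if "K \<in> avail k ?Ks" for K p
    using outdeg_new_node[OF t that] by (simp add: atLeastAtMostSuc_conv outdeg_append)
  then have "(\<Sum>K\<in>avail k ?Ks. \<Sum>p\<le>nchildren ?Ks K. \<Sum>u\<in>{1..Suc n}. \<psi> (outdeg (t @ [(K, p)]) u)) =
      (\<Sum>K\<in>avail k ?Ks. ?w K * \<psi> 0)
      + (\<Sum>u\<in>{1..n}. \<Sum>K\<in>avail k ?Ks. ?w K * \<psi> (outdeg t u + of_bool (Node u \<in> K)))"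
    by (simp add: sum.distrib distrib_left sum_distrib_left sum.swap[of _ "avail k ?Ks"] add.commute[of 1])
  also have "(\<Sum>K\<in>avail k ?Ks. ?w K * \<psi> 0) = insertion_ways k n * \<psi> 0"
    using sum_attach_weight[OF valid] len by (simp add: sum_distrib_right[symmetric])
  also have "(\<Sum>u\<in>{1..n}. \<Sum>K\<in>avail k ?Ks. ?w K * \<psi> (outdeg t u + of_bool (Node u \<in> K))) =
      (\<Sum>u\<in>{1..n}. (insertion_ways k n - real k * (real (outdeg t u) + 1)) * \<psi> (outdeg t u)
                   + real k * (real (outdeg t u) + 1) * \<psi> (Suc (outdeg t u)))"
    using sum_attach_weight_step[OF valid] len
    by (intro sum.cong refl) (simp add: outdeg_eq_length_filter)
  finally show ?thesis by simp
qed

lemma degree_sum_Suc: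
  "degree_sum k (Suc n) \<psi> =
     degree_sum k n (\<lambda>d. (insertion_ways k n - real k * (real d + 1)) * \<psi> d
                         + real k * (real d + 1) * \<psi> (Suc d))
     + insertion_ways k n * \<psi> 0 * tree_count k n"
proof -
  have "degree_sum k (Suc n) \<psi> =
    (\<Sum>t\<in>trees k n.
       (\<Sum>u\<in>{1..n}. (insertion_ways k n - real k * (real (outdeg t u) + 1)) * \<psi> (outdeg t u)
                    + real k * (real (outdeg t u) + 1) * \<psi> (Suc (outdeg t u)))
       + insertion_ways k n * \<psi> 0)"
    unfolding degree_sum_def sum_trees_Suc by (intro sum.cong refl sum_extensions_outdeg)
  then show ?thesis by (simp add: degree_sum_def sum.distrib card_trees)
qed

definition signed_binomial :: "nat \<Rightarrow> nat \<Rightarrow> real" where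
  "signed_binomial l d = (-1) ^ d * real (l choose d)"

lemma signed_binomial_eigen:
  fixes a c :: real
  shows "(a - c * (real d + 1)) * signed_binomial l d + c * (real d + 1) * signed_binomial l (Suc d) =
           (a - c * (real l + 1)) * signed_binomial l d"
proof -
  have "(real d + 1) * signed_binomial l (Suc d) = - ((-1) ^ d * ((real d + 1) * real (l choose Suc d)))"
    by (simp add: signed_binomial_def)
  also have "\<dots> = - (real l - real d) * signed_binomial l d"
    by (simp only: Suc_times_binomial_real signed_binomial_def) (simp add: algebra_simps)
  finally have "c * (real d + 1) * signed_binomial l (Suc d) = - c * (real l - real d) * signed_binomial l d"
    by (metis mult.assoc mult_minus_left mult_minus_right)
  then show ?thesis by (simp add: algebra_simps)
qed

definition eigen_prod :: "nat \<Rightarrow> nat \<Rightarrow> nat \<Rightarrow> real" where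
  "eigen_prod k l n = (\<Prod>i<n. insertion_ways k i - real k * (real l + 1))"

lemma degree_sum_signed_binomial:
  "degree_sum k n (signed_binomial l) =
     (tree_count k (Suc n) - eigen_prod k l n) / (real k * (real l + 2) + 1)"
proof (induction n)
  case 0
  then show ?case by (simp add: degree_sum_def tree_count_def eigen_prod_def insertion_ways_def)
next
  case (Suc n)
  let ?c = "real k * (real l + 1)"
  have "degree_sum k (Suc n) (signed_binomial l) =
          (insertion_ways k n - ?c) * degree_sum k n (signed_binomial l)
          + insertion_ways k n * tree_count k n"
    by (simp add: degree_sum_Suc signed_binomial_eigen degree_sum_cmult)
      (simp add: signed_binomial_def)
  moreover have "eigen_prod k l (Suc n) = eigen_prod k l n * (insertion_ways k n - ?c)"
    by (simp add: eigen_prod_def)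
  moreover have "real k * (real l + 2) + 1 > 0"
    using zero_le_mult_iff[of "real k" "real l + 2"] by linarith
  ultimately show ?case
    unfolding Suc tree_count_Suc by (simp add: field_simps insertion_ways_def)
qed

lemma of_bool_eq_sum_signed_binomial:
  "of_bool (d = m) = (\<Sum>l=0..m. real (m choose l) * (-1) ^ l * signed_binomial l d)"
proof (cases "d \<le> m")
  case False
  then show ?thesis by (auto simp: signed_binomial_def intro!: sum.neutral)
next
  case True
  have "(\<Sum>l=0..m. real (m choose l) * (-1) ^ l * signed_binomial l d) =
          (\<Sum>l=d..m. real (m choose l) * (-1) ^ l * signed_binomial l d)"
    using True by (intro sum.mono_neutral_right) (auto simp: signed_binomial_def)
  also have "\<dots> = (\<Sum>j=0..m-d. real (m choose (j + d)) * (-1) ^ (j + d) * signed_binomial (j + d) d)"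
    using True
      sum.shift_bounds_cl_nat_ivl[of "\<lambda>l. real (m choose l) * (-1) ^ l * signed_binomial l d" 0 d "m - d"]
    by simp
  also have "\<dots> = real (m choose d) * (\<Sum>j\<le>m-d. (-1) ^ j * real ((m - d) choose j))"
    unfolding sum_distrib_left atLeast0AtMost
  proof (intro sum.cong refl)
    fix j assume "j \<in> {..m - d}"
    then have "real (m choose (j + d)) * real ((j + d) choose d) = real (m choose d) * real ((m - d) choose j)"
      using choose_mult[of d "j + d" m] True by (simp flip: of_nat_mult)
    then show "real (m choose (j + d)) * (-1) ^ (j + d) * signed_binomial (j + d) d =
                 real (m choose d) * ((-1) ^ j * real ((m - d) choose j))"
      unfolding signed_binomial_def by (simp add: power_add algebra_simps)
  qed
  also have "\<dots> = of_bool (d = m)"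
    using choose_alternating_sum[of "m - d", where 'a = real] True by auto
  finally show ?thesis ..
qed

lemma degree_sum_indicator:
  "degree_sum k n (\<lambda>d. of_bool (d = m)) =
     (\<Sum>l=0..m. real (m choose l) * (-1) ^ l / (real k * (real l + 2) + 1)
                * (tree_count k (Suc n) - eigen_prod k l n))"
  unfolding of_bool_eq_sum_signed_binomial degree_sum_linear[OF finite_atLeastAtMost]
  by (simp add: degree_sum_signed_binomial)

section \<open>The exact distribution\<close>

lemma Ybar_prob_eq_degree_sum:
  assumes "n \<ge> 1"
  shows "Ybar_prob k n m = degree_sum k n (\<lambda>d. of_bool (d = m)) / (real n * tree_count k n)"
proof -
  let ?S = "trees k n \<times> {1..n}"
  have "trees k n \<noteq> {}"
    using tree_count_pos[of k n] card_trees[of k n] by (metis card.empty of_nat_0 less_irrefl)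
  then have S: "?S \<noteq> {}" "finite ?S" using assms finite_trees by auto
  have "real (card (?S \<inter> {x. outdeg (fst x) (snd x) = m})) = degree_sum k n (\<lambda>d. of_bool (d = m))"
    unfolding degree_sum_def using S(2)
    by (simp add: sum.cartesian_product case_prod_beta flip: sum_of_bool_eq)
  moreover have "real (card ?S) = real n * tree_count k n"
    by (simp add: card_cartesian_product card_trees)
  ultimately show ?thesis
    unfolding Ybar_prob_def measure_pmf_of_set[OF S] by simp
qed

lemma Ybar_prob_eq_tree_count:
  assumes "n \<ge> 1"
  shows "Ybar_prob k n m =
           (\<Sum>l=0..m. real (m choose l) * (-1) ^ l / (real k * (real l + 2) + 1)
                      * (tree_count k (Suc n) - eigen_prod k l n)) / (real n * tree_count k n)"
  using Ybar_prob_eq_degree_sum[OF assms] degree_sum_indicator by simp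

lemma tree_count_eq_gbinomial:
  "tree_count k n = fact n * (real k + 1) ^ n * ((real n - real k / (real k + 1)) gchoose n)"
proof -
  have "tree_count k n = (\<Prod>i<n. (real k + 1) * (- (real k / (real k + 1)) + 1 + real i))"
    unfolding tree_count_def insertion_ways_def
    by (intro prod.cong refl) (simp add: field_simps add_pos_nonneg)
  also have "\<dots> = fact n * (real k + 1) ^ n * ((real n + - (real k / (real k + 1))) gchoose n)"
    by (rule gbinomial_mult_fact_power[symmetric])
  finally show ?thesis by simp
qed

lemma tree_count_Suc_eq_gbinomial:
  "tree_count k (Suc n) = fact n * (real k + 1) ^ n * ((real n + 1 / (real k + 1)) gchoose n)"
proof -
  have "tree_count k (Suc n) = (\<Prod>i<n. (real k + 1) * (1 / (real k + 1) + 1 + real i))"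
    unfolding tree_count_def insertion_ways_def prod.lessThan_Suc_shift
    by (simp, intro prod.cong refl) (simp add: field_simps add_pos_nonneg)
  also have "\<dots> = fact n * (real k + 1) ^ n * ((real n + 1 / (real k + 1)) gchoose n)"
    by (rule gbinomial_mult_fact_power[symmetric])
  finally show ?thesis .
qed

lemma eigen_prod_eq_gbinomial:
  "eigen_prod k l n =
     fact n * (real k + 1) ^ n * ((real n - real k * (real l + 2) / (real k + 1)) gchoose n)"
proof -
  have "eigen_prod k l n = (\<Prod>i<n. (real k + 1) * (- (real k * (real l + 2) / (real k + 1)) + 1 + real i))"
    unfolding eigen_prod_def insertion_ways_def
    by (intro prod.cong refl) (simp add: field_simps add_pos_nonneg)
  also have "\<dots> = fact n * (real k + 1) ^ n * ((real n + - (real k * (real l + 2) / (real k + 1))) gchoose n)"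
    by (rule gbinomial_mult_fact_power[symmetric])
  finally show ?thesis by simp
qed

lemma Ybar_prob_eq_gbinomial:
  assumes "n \<ge> 1"
  shows "Ybar_prob k n m =
           1 / (real n * ((real n - real k / (real k + 1)) gchoose n)) *
           (\<Sum>l=0..m. real (m choose l) * (-1) ^ l / (real k * (real l + 2) + 1) *
              (((real n + 1 / (real k + 1)) gchoose n)
               - ((real n - real k * (real l + 2) / (real k + 1)) gchoose n)))"
proof -
  define \<alpha> where "\<alpha> = fact n * (real k + 1) ^ n"
  have "\<alpha> > 0" unfolding \<alpha>_def by (simp add: add_pos_nonneg)
  then have G: "(real n - real k / (real k + 1)) gchoose n = tree_count k n / \<alpha>"
      "(real n + 1 / (real k + 1)) gchoose n = tree_count k (Suc n) / \<alpha>"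
      "\<And>l. (real n - real k * (real l + 2) / (real k + 1)) gchoose n = eigen_prod k l n / \<alpha>"
    unfolding tree_count_eq_gbinomial[of k n] tree_count_Suc_eq_gbinomial eigen_prod_eq_gbinomial \<alpha>_def
    by simp_all
  have "(\<Sum>l=0..m. real (m choose l) * (-1) ^ l / (real k * (real l + 2) + 1) *
              (((real n + 1 / (real k + 1)) gchoose n)
               - ((real n - real k * (real l + 2) / (real k + 1)) gchoose n))) =
        (\<Sum>l=0..m. real (m choose l) * (-1) ^ l / (real k * (real l + 2) + 1)
                      * (tree_count k (Suc n) - eigen_prod k l n)) / \<alpha>"
    unfolding G sum_divide_distrib by (intro sum.cong refl) (simp add: diff_divide_distrib[symmetric])
  then show ?thesis
    unfolding Ybar_prob_eq_tree_count[OF assms] G(1)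
    using \<open>\<alpha> > 0\<close> tree_count_pos[of k n] assms by (simp add: field_simps)
qed

section \<open>The limit law\<close>

lemma tree_count_Suc_ratio_tendsto:
  "(\<lambda>n. tree_count k (Suc n) / (real n * tree_count k n)) \<longlonglongrightarrow> real k + 1"
proof -
  have "(\<lambda>n. real k + 1 + 1 / real n) \<longlonglongrightarrow> real k + 1 + 0"
    by (intro tendsto_intros)
  moreover have "real k + 1 + 1 / real n = tree_count k (Suc n) / (real n * tree_count k n)"
    if "n \<ge> 1" for n
    using that tree_count_pos[of k n]
    by (simp add: tree_count_Suc insertion_ways_def field_simps)
  ultimately show ?thesis
    by (simp add: Lim_transform_eventually eventually_sequentiallyI[of 1])
qed

lemma eigen_prod_ratio_tendsto:
  "(\<lambda>n. eigen_prod k l n / (real n * tree_count k n)) \<longlonglongrightarrow> 0"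
proof -
  define a where "a i = (insertion_ways k i - real k * (real l + 1)) / insertion_ways k i" for i
  define B where "B = (\<Prod>i<Suc l. \<bar>a i\<bar>)"
  have a_bounds: "0 \<le> a i \<and> a i \<le> 1" if "i \<ge> Suc l" for i
  proof -
    have "real k * (real l + 1) \<le> real k * real i"
      using that by (intro mult_left_mono) auto
    then show ?thesis
      using insertion_ways_pos[of k i] unfolding a_def insertion_ways_def
      by (simp add: divide_simps algebra_simps)
  qed
  have ratio_bound: "\<bar>eigen_prod k l n / tree_count k n\<bar> \<le> B" if "n \<ge> Suc l" for n
  proof -
    have "{..<n} = {..<Suc l} \<union> {Suc l..<n}" using that by auto
    then have "(\<Prod>i<n. \<bar>a i\<bar>) = B * (\<Prod>i\<in>{Suc l..<n}. \<bar>a i\<bar>)"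
      unfolding B_def by (metis finite_atLeastLessThan finite_lessThan ivl_disj_int_one(2) prod.union_disjoint)
    also have "\<dots> \<le> B"
      using a_bounds unfolding B_def
      by (intro mult_left_le prod_le_1 prod_nonneg) auto
    finally show ?thesis
      by (simp add: eigen_prod_def tree_count_def a_def prod_dividef abs_prod)
  qed
  have "norm (eigen_prod k l n / (real n * tree_count k n)) \<le> B / real n"
    if "n \<ge> Suc l" for n
  proof -
    have "norm (eigen_prod k l n / (real n * tree_count k n)) =
            \<bar>eigen_prod k l n / tree_count k n\<bar> / real n"
      by (simp add: abs_divide abs_mult divide_divide_eq_left mult.commute)
    also have "\<dots> \<le> B / real n"
      using ratio_bound that by (intro divide_right_mono) auto
    finally show ?thesis .
  qed
  then show ?thesis
    by (intro Lim_null_comparison[OF eventually_sequentiallyI lim_const_over_n])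
qed

lemma p_lim_eq_fact_div_pochhammer:
  assumes "k \<ge> 1"
  shows "p_lim k m = (real k + 1) / real k * fact m / pochhammer (2 + 1 / real k) (Suc m)"
proof -
  define P where "P = pochhammer (2 + 1 / real k) (Suc m)"
  have "P > 0" unfolding P_def by (intro pochhammer_pos) (simp add: add_pos_nonneg)
  have "(real m + 2 + 1 / real k) gchoose (m + 1) = P / fact (Suc m)"
    unfolding P_def by (simp add: gbinomial_pochhammer')
  then have "p_lim k m = (real k + 1) / (real k * (P / fact m))"
    unfolding p_lim_def by (simp add: fact_Suc del: of_nat_Suc)
  then show ?thesis
    using \<open>P > 0\<close> assms unfolding P_def[symmetric] by (simp add: field_simps)
qed

lemma p_lim_nonneg: "k \<ge> 1 \<Longrightarrow> p_lim k m \<ge> 0"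
  unfolding p_lim_eq_fact_div_pochhammer
  by (intro divide_nonneg_pos mult_nonneg_nonneg pochhammer_pos) (auto simp: add_pos_nonneg)

lemma p_lim_sums:
  assumes "k \<ge> 1"
  shows "p_lim k sums 1"
proof -
  have "(real k + 1) / real k = 2 + 1 / real k - 1"
    using assms by (simp add: field_simps)
  then show ?thesis
    using sums_fact_div_pochhammer[of "2 + 1 / real k"]
    by (simp add: p_lim_eq_fact_div_pochhammer[OF assms, abs_def])
qed

lemma sum_alternating_binomial_eq_p_lim:
  assumes "k \<ge> 1"
  shows "(\<Sum>l=0..m. real (m choose l) * (-1) ^ l / (real k * (real l + 2) + 1)) * (real k + 1) = p_lim k m"
proof -
  have "real k * (real l + 2) + 1 = real k * (real l + (2 + 1 / real k))" for l
    using assms by (simp add: field_simps)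
  then have "(\<Sum>l=0..m. real (m choose l) * (-1) ^ l / (real k * (real l + 2) + 1)) =
               (\<Sum>l\<le>m. real (m choose l) * (-1) ^ l / (real l + (2 + 1 / real k))) / real k"
    by (simp add: atLeast0AtMost sum_divide_distrib mult.commute)
  also have "\<dots> = fact m / pochhammer (2 + 1 / real k) (Suc m) / real k"
    by (subst sum_alternating_binomial_divide) (auto simp: add_pos_nonneg)
  finally show ?thesis
    unfolding p_lim_eq_fact_div_pochhammer[OF assms] by (simp add: ac_simps)
qed

lemma Ybar_prob_tendsto_p_lim:
  assumes "k \<ge> 1"
  shows "(\<lambda>n. Ybar_prob k n m) \<longlonglongrightarrow> p_lim k m"
proof -
  let ?c = "\<lambda>l. real (m choose l) * (-1) ^ l / (real k * (real l + 2) + 1)"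
  have "(\<lambda>n. \<Sum>l=0..m. ?c l * (tree_count k (Suc n) / (real n * tree_count k n)
                                   - eigen_prod k l n / (real n * tree_count k n)))
          \<longlonglongrightarrow> (\<Sum>l=0..m. ?c l * (real k + 1 - 0))"
    by (intro tendsto_intros tree_count_Suc_ratio_tendsto eigen_prod_ratio_tendsto)
  moreover have "(\<Sum>l=0..m. ?c l * (real k + 1 - 0)) = p_lim k m"
    using sum_alternating_binomial_eq_p_lim[OF assms] by (simp add: sum_distrib_right)
  moreover have "Ybar_prob k n m =
      (\<Sum>l=0..m. ?c l * (tree_count k (Suc n) / (real n * tree_count k n)
                         - eigen_prod k l n / (real n * tree_count k n)))" if "n \<ge> 1" for n
    unfolding Ybar_prob_eq_tree_count[OF that] sum_divide_distrib
    by (simp add: diff_divide_distrib[symmetric])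
  ultimately show ?thesis
    by (simp add: Lim_transform_eventually eventually_sequentiallyI[of 1])
qed

lemma p_lim_asymp_equiv:
  assumes "k \<ge> 1"
  shows "p_lim k \<sim>[at_top]
           (\<lambda>m. (real k + 1) / real k * Gamma (2 + 1 / real k) * real m powr (-2 - 1 / real k))"
proof -
  define z where "z = 2 + 1 / real k"
  have "z > 0" unfolding z_def by (simp add: add_pos_nonneg)
  have "p_lim k m = (real k + 1) / real k * Gamma_series z m * real m powr (- z)" if "m \<ge> 1" for m
  proof -
    have "real m > 0" using that by simp
    then obtain e where e: "exp (z * ln (real m)) = e" "real m powr (- z) = inverse e" "e > 0"
      by (simp add: powr_def powr_minus exp_minus)
    then show ?thesis
      using pochhammer_pos[OF \<open>z > 0\<close>, of "Suc m"] assms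
      unfolding p_lim_eq_fact_div_pochhammer[OF assms] Gamma_series_def z_def[symmetric] e(2)
      by (simp add: e(1) field_simps)
  qed
  moreover have "Gamma_series z \<sim>[at_top] (\<lambda>_. Gamma z)"
    using Gamma_series_LIMSEQ[of z] Gamma_real_pos[OF \<open>z > 0\<close>]
    by (intro tendsto_imp_asymp_equiv_const) auto
  then have "(\<lambda>m. (real k + 1) / real k * Gamma_series z m * real m powr (- z)) \<sim>[at_top]
               (\<lambda>m. (real k + 1) / real k * Gamma z * real m powr (- z))"
    by (intro asymp_equiv_intros)
  ultimately show ?thesis
    unfolding z_def by (subst asymp_equiv_cong[OF eventually_at_top_linorderI[of 1]]) auto
qed

theorem theorem3:
  fixes k :: nat
  assumes "k \<ge> 1"
  shows "(\<forall>n m. n \<ge> 1 \<longrightarrow>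
            Ybar_prob k n m =
              1 / (real n * ((real n - real k / (real k + 1)) gchoose n)) *
              (\<Sum>l=0..m. real (m choose l) * (-1) ^ l / (real k * (real l + 2) + 1) *
                 (((real n + 1 / (real k + 1)) gchoose n)
                  - ((real n - real k * (real l + 2) / (real k + 1)) gchoose n))))
       \<and> (\<forall>m. p_lim k m \<ge> 0)
       \<and> (p_lim k sums 1)
       \<and> (\<forall>m. (\<lambda>n. Ybar_prob k n m) \<longlonglongrightarrow> p_lim k m)
       \<and> (p_lim k \<sim>[at_top]
            (\<lambda>m. (real k + 1) / real k * Gamma (2 + 1 / real k) * real m powr (-2 - 1 / real k)))"
  using Ybar_prob_eq_gbinomial p_lim_nonneg[OF assms] p_lim_sums[OF assms]
    Ybar_prob_tendsto_p_lim[OF assms] p_lim_asymp_equiv[OF assms]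
  by blast

end
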